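(* Let $1<q\le p<r\le s<\infty$ and let $\mu$ be a finite measure on $(X,\Sigma)$, $X=(0,1)$. If $L^{p,q)}(X,\mu)\subseteq L^{r,s)}(X,\mu)$, then there is a constant $M>0$ such that $\mu(A)\ge M$ for every $A\in\Sigma$ with $\mu(A)>0$.
   Context: $X=(0,1)$ with a $\sigma$-algebra $\Sigma$. For a measurable $f$ on $X$, $\lambda_f(y)=\mu\{x:|f(x)|>y\}$ ($y>0$) and $f^*(t)=\inf\{y>0:\lambda_f(y)\le t\}$ ($t>0$). For $1<p<\infty$, $1<q<\infty$, $L^{p,q)}(X,\mu)$ consists of measurable $f$ with $\|f\|_{p,q),\mu}=\sup_{0<\varepsilon<q-1}\big(\frac qp\varepsilon\int_0^1 t^{\frac qp-1}[f^*(t)]^{q-\varepsilon}dt\big)^{1/(q-\varepsilon)}<\infty$; $L^{r,s)}(X,\mu)$ is defined likewise with $r,s$. *)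

theory Defs
  imports "HOL-Analysis.Analysis"
begin

definition distrib_fun :: "real measure \<Rightarrow> (real \<Rightarrow> real) \<Rightarrow> real \<Rightarrow> real" where
  "distrib_fun \<mu> f y = measure \<mu> {x \<in> space \<mu>. \<bar>f x\<bar> > y}"

definition rearr :: "real measure \<Rightarrow> (real \<Rightarrow> real) \<Rightarrow> real \<Rightarrow> real" where
  "rearr \<mu> f t = Inf {y. y > 0 \<and> distrib_fun \<mu> f y \<le> t}"

definition glz_integral :: "real measure \<Rightarrow> real \<Rightarrow> real \<Rightarrow> real \<Rightarrow> (real \<Rightarrow> real) \<Rightarrow> ennreal" where
  "glz_integral \<mu> p q \<epsilon> f =
     (\<integral>\<^sup>+ t \<in> {0<..<1}. ennreal (t powr (q / p - 1) * (rearr \<mu> f t) powr (q - \<epsilon>)) \<partial>lborel)"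

definition grand_lorentz :: "real measure \<Rightarrow> real \<Rightarrow> real \<Rightarrow> (real \<Rightarrow> real) set" where
  "grand_lorentz \<mu> p q =
     {f \<in> borel_measurable \<mu>. \<exists>C::real. \<forall>\<epsilon>. 0 < \<epsilon> \<and> \<epsilon> < q - 1 \<longrightarrow>
        glz_integral \<mu> p q \<epsilon> f < \<infinity> \<and>
        ((q / p) * \<epsilon> * enn2real (glz_integral \<mu> p q \<epsilon> f)) powr (1 / (q - \<epsilon>)) \<le> C}"

end

theory Submission
  imports Defs "HOL-Real_Asymp.Real_Asymp"
begin

(* If sets of positive measure can be arbitrarily small, choose disjoint sets E_k whose measures
   a_k at least halve from one k to the next, and let f take the value a_k^(-alpha) on E_k, where
   1/r < alpha < 1/p.  Since the a_k decay geometrically, the rearrangement of f behaves like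
   t^(-alpha): f*(t) <= K t^(-alpha) on (0,1), and f*(t) >= a_k^(-alpha) for t < a_k.  The upper
   bound puts f into L^{p,q)}, because t^(q/p - 1 - alpha (q - eps)) is integrable uniformly in eps.
   The lower bound gives int_0^1 t^(s/r - 1) f*(t)^(s - eps) dt >= (r/s) a_k^(s/r - alpha (s - eps)),
   and for small eps the exponent is negative, so f is not in L^{r,s)}. *)

lemma rearr_le:
  assumes "0 < y" "distrib_fun \<mu> f y \<le> t"
  shows "rearr \<mu> f t \<le> y"
  unfolding rearr_def
  by (rule cInf_lower) (use assms in \<open>auto intro!: bdd_belowI[of _ 0]\<close>)

lemma rearr_ge:
  assumes "\<exists>y>0. distrib_fun \<mu> f y \<le> t"
    and "\<And>y. 0 < y \<Longrightarrow> y < c \<Longrightarrow> t < distrib_fun \<mu> f y"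
  shows "c \<le> rearr \<mu> f t"
  unfolding rearr_def
  by (rule cInf_greatest) (use assms in \<open>force simp: not_less[symmetric]\<close>)+

lemma rearr_nonneg:
  assumes "\<exists>y>0. distrib_fun \<mu> f y \<le> t"
  shows "0 \<le> rearr \<mu> f t"
  using rearr_ge[of \<mu> f t 0] assms by auto

lemma powr_le_max_one:
  fixes x Q e :: real
  assumes "0 \<le> x" "x \<le> Q" "0 < e" "e \<le> 1"
  shows "x powr e \<le> max 1 Q"
proof (cases "x \<le> 1")
  case True
  hence "x powr e \<le> 1 powr e" using assms by (intro powr_mono2) auto
  thus ?thesis by simp
next
  case False
  hence "x powr e \<le> x powr 1" using assms by (intro powr_mono) auto
  thus ?thesis using False assms by simp
qed

lemma nn_integral_mult_powr_Ioo:
  fixes a c M :: real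
  assumes "0 < a" "0 < c" "0 \<le> M"
  shows "(\<integral>\<^sup>+ t \<in> {0<..<a}. ennreal (M * t powr (c - 1)) \<partial>lborel) = ennreal (M * (a powr c / c))"
proof -
  have "((\<lambda>x. x powr (c - 1)) has_integral (a powr (c - 1 + 1) / (c - 1 + 1))) {0..a}"
    using assms by (intro has_integral_powr_from_0) auto
  hence "((\<lambda>x. x powr (c - 1)) has_integral (a powr c / c)) {0<..<a}"
    by (simp add: has_integral_Icc_iff_Ioo)
  hence "((\<lambda>x. M * x powr (c - 1)) has_integral (M * (a powr c / c))) {0<..<a}"
    by (rule has_integral_mult_right)
  hence "(\<integral>\<^sup>+ t. ennreal (indicator {0<..<a} t * (M * t powr (c - 1))) \<partial>lborel) = ennreal (M * (a powr c / c))"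
    by (rule nn_integral_has_integral_lebesgue[rotated]) (use assms in auto)
  thus ?thesis
    by (simp add: indicator_mult_ennreal mult.commute)
qed

lemma geometric_tail_le:
  fixes a :: "nat \<Rightarrow> real" and \<rho> :: real
  assumes nonneg: "\<And>k. 0 \<le> a k" and ratio: "\<And>k. a (Suc k) \<le> \<rho> * a k"
    and "0 \<le> \<rho>" "\<rho> < 1"
  shows "summable (\<lambda>j. a (n + j))" and "(\<Sum>j. a (n + j)) \<le> a n / (1 - \<rho>)"
proof -
  have le: "a (n + j) \<le> a n * \<rho> ^ j" for j
  proof (induction j)
    case (Suc j)
    have "a (n + Suc j) \<le> \<rho> * a (n + j)" using ratio[of "n + j"] by simp
    also have "\<dots> \<le> \<rho> * (a n * \<rho> ^ j)" using Suc \<open>0 \<le> \<rho>\<close> by (rule mult_left_mono)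
    finally show ?case by (simp add: algebra_simps)
  qed simp
  have geometric: "summable (\<lambda>j. a n * \<rho> ^ j)"
    using assms by (intro summable_mult summable_geometric) auto
  show summable: "summable (\<lambda>j. a (n + j))"
    by (rule summable_comparison_test'[OF geometric]) (use le nonneg in auto)
  have "(\<Sum>j. a (n + j)) \<le> (\<Sum>j. a n * \<rho> ^ j)"
    by (rule suminf_le[OF le summable geometric])
  also have "\<dots> = a n / (1 - \<rho>)"
    using assms by (subst suminf_mult[OF summable_geometric]) (auto simp: suminf_geometric)
  finally show "(\<Sum>j. a (n + j)) \<le> a n / (1 - \<rho>)" .
qed

lemma (in finite_measure) shrinking_sets_if_small_sets:
  assumes small: "\<And>\<epsilon>. 0 < \<epsilon> \<Longrightarrow> \<exists>A\<in>sets M. 0 < measure M A \<and> measure M A < \<epsilon>"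
  obtains B where "\<And>k. B k \<in> sets M" "\<And>k. 0 < measure M (B k)"
    "\<And>k. measure M (B (Suc k)) < measure M (B k) / 4"
proof -
  have "\<exists>B. \<forall>k. (B k \<in> sets M \<and> 0 < measure M (B k)) \<and> measure M (B (Suc k)) < measure M (B k) / 4"
  proof (rule dependent_nat_choice)
    show "\<exists>A. A \<in> sets M \<and> 0 < measure M A"
      using small[of 1] by auto
    show "\<exists>A'. (A' \<in> sets M \<and> 0 < measure M A') \<and> measure M A' < measure M A / 4"
      if "A \<in> sets M \<and> 0 < measure M A" for A
      using small[of "measure M A / 4"] that by auto
  qed
  thus ?thesis using that by blast
qed

lemma (in finite_measure) halving_disjoint_family_if_small_sets:
  assumes "\<And>\<epsilon>. 0 < \<epsilon> \<Longrightarrow> \<exists>A\<in>sets M. 0 < measure M A \<and> measure M A < \<epsilon>"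
  obtains E where "disjoint_family E" "\<And>k. E k \<in> sets M" "\<And>k. 0 < measure M (E k)"
    "\<And>k. measure M (E (Suc k)) \<le> measure M (E k) / 2"
proof -
  obtain B where B_sets: "\<And>k. B k \<in> sets M" and B_pos: "\<And>k. 0 < measure M (B k)"
    and B_shrink: "\<And>k. measure M (B (Suc k)) < measure M (B k) / 4"
    using shrinking_sets_if_small_sets[OF assms] by blast
  \<comment> \<open>The later sets together have measure below a third of B k, so E k keeps most of B k.\<close>
  define T where "T k = (\<Union>j. B (Suc k + j))" for k
  define E where "E k = B k - T k" for k
  have T_sets: "T k \<in> sets M" for k
    unfolding T_def using B_sets by auto
  have T_small: "measure M (T k) < measure M (B k) / 3" for k
  proof -
    have ratio: "measure M (B (Suc i)) \<le> 1/4 * measure M (B i)" for i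
      using B_shrink[of i] by simp
    have tail: "summable (\<lambda>j. measure M (B (Suc k + j)))"
      "(\<Sum>j. measure M (B (Suc k + j))) \<le> measure M (B (Suc k)) / (1 - 1/4)"
      using geometric_tail_le[of "\<lambda>i. measure M (B i)" _ "Suc k", OF measure_nonneg ratio]
      by simp_all
    have "measure M (T k) \<le> (\<Sum>j. measure M (B (Suc k + j)))"
      unfolding T_def using B_sets tail(1) by (intro finite_measure_subadditive_countably) auto
    thus ?thesis using tail(2) B_shrink[of k] by simp
  qed
  have E_large: "2/3 * measure M (B k) < measure M (E k)" for k
  proof -
    have "measure M (B k) \<le> measure M (E k \<union> T k)"
      unfolding E_def using B_sets T_sets by (intro finite_measure_mono) auto
    also have "\<dots> \<le> measure M (E k) + measure M (T k)"
      unfolding E_def using B_sets T_sets by (intro measure_Un_le) auto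
    finally show ?thesis using T_small[of k] by simp
  qed
  have E_sub_T: "E j \<subseteq> T i" if "i < j" for i j
    using that unfolding E_def T_def by (auto intro!: exI[of _ "j - Suc i"])
  show ?thesis
  proof
    show "disjoint_family E"
      unfolding disjoint_family_on_def
      by (metis Diff_disjoint E_def E_sub_T Int_commute disjoint_iff_not_equal
          linorder_neqE_nat subset_iff)
    show "E k \<in> sets M" for k
      unfolding E_def using B_sets T_sets by auto
    show "0 < measure M (E k)" for k
      using E_large[of k] B_pos[of k] by linarith
    show "measure M (E (Suc k)) \<le> measure M (E k) / 2" for k
    proof -
      have "measure M (E (Suc k)) \<le> measure M (B (Suc k))"
        unfolding E_def using B_sets by (intro finite_measure_mono) auto
      thus ?thesis using B_shrink[of k] E_large[of k] measure_nonneg[of M "E k"] by linarith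
    qed
  qed
qed

locale halving_layers = finite_measure M for M :: "real measure" +
  fixes E :: "nat \<Rightarrow> real set" and \<alpha> :: real
  assumes disjoint_E: "disjoint_family E"
    and sets_E: "E k \<in> sets M"
    and measure_pos: "0 < measure M (E k)"
    and measure_halving: "measure M (E (Suc k)) \<le> measure M (E k) / 2"
    and \<alpha>_pos: "0 < \<alpha>"
begin

definition height :: "nat \<Rightarrow> real" where
  "height k = measure M (E k) powr (- \<alpha>)"

definition layer_fun :: "real \<Rightarrow> real" where
  "layer_fun x = (\<Sum>k. height k * indicator (E k) x)"

lemma measure_tail_le: "(\<Sum>j. measure M (E (n + j))) \<le> 2 * measure M (E n)"
  and measure_tail_summable: "summable (\<lambda>j. measure M (E (n + j)))"
proof -
  have ratio: "measure M (E (Suc k)) \<le> 1/2 * measure M (E k)" for k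
    using measure_halving[of k] by simp
  show "(\<Sum>j. measure M (E (n + j))) \<le> 2 * measure M (E n)"
    "summable (\<lambda>j. measure M (E (n + j)))"
    using geometric_tail_le[of "\<lambda>k. measure M (E k)" "1/2" n, OF measure_nonneg ratio]
    by simp_all
qed

lemma measure_tendsto_0: "(\<lambda>k. measure M (E k)) \<longlonglongrightarrow> 0"
  using summable_LIMSEQ_zero measure_tail_summable[of 0] by simp

lemma measure_antimono: "i \<le> j \<Longrightarrow> measure M (E j) \<le> measure M (E i)"
proof (rule decseqD[of "\<lambda>k. measure M (E k)"])
  show "decseq (\<lambda>k. measure M (E k))"
  proof (rule decseq_SucI)
    show "measure M (E (Suc k)) \<le> measure M (E k)" for k
      using measure_halving[of k] measure_pos[of k] by linarith
  qed
qed

lemma height_pos: "0 < height k"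
  unfolding height_def using measure_pos[of k] by simp

lemma height_mono: "i \<le> j \<Longrightarrow> height i \<le> height j"
  unfolding height_def using \<alpha>_pos by (intro powr_mono2' measure_pos measure_antimono) simp_all

lemma layer_fun_eq: "x \<in> E k \<Longrightarrow> layer_fun x = height k"
proof -
  assume x: "x \<in> E k"
  have "x \<notin> E i" if "i \<noteq> k" for i
    using disjoint_family_onD[OF disjoint_E, of i k] x that by auto
  hence "(\<lambda>i. height i * indicator (E i) x) = (\<lambda>i. if i = k then height i else 0)"
    using x by (auto simp: indicator_def)
  thus ?thesis unfolding layer_fun_def using sums_single[of k height] by (simp add: sums_iff)
qed

lemma layer_fun_outside: "(\<And>k. x \<notin> E k) \<Longrightarrow> layer_fun x = 0"
  by (simp add: layer_fun_def)

lemma layer_fun_measurable: "layer_fun \<in> borel_measurable M"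
  unfolding layer_fun_def[abs_def]
  by (intro borel_measurable_suminf borel_measurable_times borel_measurable_const
      borel_measurable_indicator sets_E)

lemma distrib_fun_height_le: "distrib_fun M layer_fun (height n) \<le> 2 * measure M (E (Suc n))"
proof -
  have "{x \<in> space M. height n < \<bar>layer_fun x\<bar>} \<subseteq> (\<Union>j. E (Suc n + j))"
  proof
    fix x assume x: "x \<in> {x \<in> space M. height n < \<bar>layer_fun x\<bar>}"
    then obtain k where k: "x \<in> E k"
      using layer_fun_outside height_pos by (metis abs_zero mem_Collect_eq not_less_iff_gr_or_eq)
    hence "n < k" using x height_mono layer_fun_eq height_pos by (metis abs_of_pos mem_Collect_eq not_le)
    thus "x \<in> (\<Union>j. E (Suc n + j))" using k by (auto intro!: exI[of _ "k - Suc n"])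
  qed
  hence "distrib_fun M layer_fun (height n) \<le> measure M (\<Union>j. E (Suc n + j))"
    unfolding distrib_fun_def using sets_E by (intro finite_measure_mono) auto
  also have "\<dots> \<le> (\<Sum>j. measure M (E (Suc n + j)))"
    using sets_E measure_tail_summable[of "Suc n"]
    by (intro finite_measure_subadditive_countably) auto
  also have "\<dots> \<le> 2 * measure M (E (Suc n))"
    by (rule measure_tail_le)
  finally show ?thesis .
qed

lemma distrib_fun_ge: "y < height k \<Longrightarrow> measure M (E k) \<le> distrib_fun M layer_fun y"
  unfolding distrib_fun_def using sets.sets_into_space[OF sets_E[of k]] layer_fun_measurable
  by (intro finite_measure_mono) (auto simp: layer_fun_eq)

lemma exists_layer_below: "0 < t \<Longrightarrow> \<exists>n. 2 * measure M (E (Suc n)) \<le> t"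
proof -
  assume "0 < t"
  hence "\<forall>\<^sub>F k in sequentially. measure M (E k) < t / 2"
    using order_tendstoD(2)[OF measure_tendsto_0, of "t / 2"] by simp
  then obtain N where "\<And>k. N \<le> k \<Longrightarrow> measure M (E k) < t / 2"
    by (auto simp: eventually_sequentially)
  hence "measure M (E (Suc N)) < t / 2" by simp
  thus ?thesis by (intro exI[of _ N]) simp
qed

lemma exists_distrib_fun_le: "0 < t \<Longrightarrow> \<exists>y>0. distrib_fun M layer_fun y \<le> t"
  using exists_layer_below distrib_fun_height_le height_pos by (meson order_trans)

lemma rearr_ge_height: "0 < t \<Longrightarrow> t < measure M (E k) \<Longrightarrow> height k \<le> rearr M layer_fun t"
  by (intro rearr_ge exists_distrib_fun_le) (auto intro: less_le_trans[OF _ distrib_fun_ge])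

lemma rearr_le_powr:
  obtains K where "1 \<le> K"
    and "\<And>t. 0 < t \<Longrightarrow> t < 1 \<Longrightarrow> 0 \<le> rearr M layer_fun t \<and> rearr M layer_fun t \<le> K * t powr (- \<alpha>)"
proof -
  define K where "K = max (height 0) (2 powr \<alpha>)"
  have K: "1 \<le> K" unfolding K_def using \<alpha>_pos by (simp add: le_max_iff_disj ge_one_powr_ge_zero)
  have "0 \<le> rearr M layer_fun t \<and> rearr M layer_fun t \<le> K * t powr (- \<alpha>)"
    if t: "0 < t" "t < 1" for t
  proof
    show "0 \<le> rearr M layer_fun t"
      using rearr_nonneg exists_distrib_fun_le t(1) by blast
    define n where "n = (LEAST n. 2 * measure M (E (Suc n)) \<le> t)"
    have "2 * measure M (E (Suc n)) \<le> t"
      unfolding n_def using exists_layer_below[OF t(1)] by (rule LeastI_ex)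
    hence "distrib_fun M layer_fun (height n) \<le> t"
      using distrib_fun_height_le[of n] by linarith
    hence "rearr M layer_fun t \<le> height n"
      by (rule rearr_le[OF height_pos])
    also have "height n \<le> K * t powr (- \<alpha>)"
    proof (cases n)
      case 0
      have "height n \<le> K" unfolding K_def 0 by simp
      also have "K \<le> K * t powr (- \<alpha>)"
        using K t \<alpha>_pos powr_mono2'[of "- \<alpha>" t 1] by simp
      finally show ?thesis .
    next
      case (Suc m)
      hence "\<not> 2 * measure M (E n) \<le> t"
        using not_less_Least[of m "\<lambda>n. 2 * measure M (E (Suc n)) \<le> t"] unfolding n_def by auto
      hence "height n \<le> (t / 2) powr (- \<alpha>)"
        unfolding height_def using t \<alpha>_pos by (intro powr_mono2') auto
      also have "\<dots> = 2 powr \<alpha> * t powr (- \<alpha>)"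
        using t by (simp add: powr_divide powr_minus_divide)
      also have "\<dots> \<le> K * t powr (- \<alpha>)" unfolding K_def by (intro mult_right_mono) auto
      finally show ?thesis .
    qed
    finally show "rearr M layer_fun t \<le> K * t powr (- \<alpha>)" .
  qed
  thus ?thesis by (rule that[OF K])
qed

end

lemma glz_integral_le_powr:
  assumes "\<epsilon> < q" "0 \<le> K" "0 < q / p - \<alpha> * (q - \<epsilon>)"
    and bound: "\<And>t. 0 < t \<Longrightarrow> t < 1 \<Longrightarrow> 0 \<le> rearr \<mu> f t \<and> rearr \<mu> f t \<le> K * t powr (- \<alpha>)"
  shows "glz_integral \<mu> p q \<epsilon> f \<le> ennreal (K powr (q - \<epsilon>) / (q / p - \<alpha> * (q - \<epsilon>)))"
proof -
  define \<gamma> where "\<gamma> = q - \<epsilon>"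
  define c where "c = q / p - \<alpha> * \<gamma>"
  have \<gamma>: "0 < \<gamma>" and c: "0 < c" using assms unfolding \<gamma>_def c_def by auto
  have "glz_integral \<mu> p q \<epsilon> f \<le> (\<integral>\<^sup>+ t \<in> {0<..<1}. ennreal (K powr \<gamma> * t powr (c - 1)) \<partial>lborel)"
    unfolding glz_integral_def \<gamma>_def[symmetric]
  proof (rule nn_integral_mono)
    fix t
    show "ennreal (t powr (q / p - 1) * rearr \<mu> f t powr \<gamma>) * indicator {0<..<1} t
      \<le> ennreal (K powr \<gamma> * t powr (c - 1)) * indicator {0<..<1} t"
    proof (cases "t \<in> {0<..<1}")
      case True
      hence t: "0 < t" "t < 1" by auto
      have "rearr \<mu> f t powr \<gamma> \<le> (K * t powr (- \<alpha>)) powr \<gamma>"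
        using bound[OF t] \<gamma> by (intro powr_mono2) auto
      also have "\<dots> = K powr \<gamma> * t powr (- \<alpha> * \<gamma>)"
        using assms(2) t by (simp add: powr_mult powr_powr)
      finally have "t powr (q / p - 1) * rearr \<mu> f t powr \<gamma> \<le> t powr (q / p - 1) * (K powr \<gamma> * t powr (- \<alpha> * \<gamma>))"
        by (intro mult_left_mono) auto
      also have "\<dots> = K powr \<gamma> * t powr (c - 1)"
        unfolding c_def using t by (simp add: powr_add[symmetric] algebra_simps)
      finally show ?thesis using True by (simp add: ennreal_leI)
    qed auto
  qed
  also have "\<dots> = ennreal (K powr \<gamma> / c)"
    using nn_integral_mult_powr_Ioo[of 1 c "K powr \<gamma>"] c by simp
  finally show ?thesis unfolding \<gamma>_def c_def .
qed

lemma glz_integral_ge_powr: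
  assumes "0 < p" "0 < q" "\<epsilon> < q" "0 < a" "a \<le> 1" "0 \<le> c"
    and bound: "\<And>t. 0 < t \<Longrightarrow> t < a \<Longrightarrow> c \<le> rearr \<mu> f t"
  shows "ennreal (p / q * c powr (q - \<epsilon>) * a powr (q / p)) \<le> glz_integral \<mu> p q \<epsilon> f"
proof -
  define \<gamma> where "\<gamma> = q - \<epsilon>"
  have \<gamma>: "0 < \<gamma>" using assms unfolding \<gamma>_def by auto
  have "ennreal (p / q * c powr \<gamma> * a powr (q / p))
      = (\<integral>\<^sup>+ t \<in> {0<..<a}. ennreal (c powr \<gamma> * t powr (q / p - 1)) \<partial>lborel)"
    using nn_integral_mult_powr_Ioo[of a "q / p" "c powr \<gamma>"] assms by simp
  also have "\<dots> \<le> glz_integral \<mu> p q \<epsilon> f"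
    unfolding glz_integral_def \<gamma>_def[symmetric]
  proof (rule nn_integral_mono)
    fix t
    show "ennreal (c powr \<gamma> * t powr (q / p - 1)) * indicator {0<..<a} t
        \<le> ennreal (t powr (q / p - 1) * rearr \<mu> f t powr \<gamma>) * indicator {0<..<1} t"
    proof (cases "t \<in> {0<..<a}")
      case True
      hence "c powr \<gamma> \<le> rearr \<mu> f t powr \<gamma>"
        using bound assms \<gamma> by (intro powr_mono2) auto
      hence "c powr \<gamma> * t powr (q / p - 1) \<le> t powr (q / p - 1) * rearr \<mu> f t powr \<gamma>"
        by (metis mult.commute mult_left_mono powr_ge_zero)
      thus ?thesis using True assms by (simp add: ennreal_leI)
    qed auto
  qed
  finally show ?thesis unfolding \<gamma>_def .
qed

lemma grand_lorentz_if_rearr_le_powr: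
  assumes f: "f \<in> borel_measurable \<mu>"
    and "1 < q" "0 < p" "0 \<le> \<alpha>" "\<alpha> < 1 / p" "1 \<le> K"
    and bound: "\<And>t. 0 < t \<Longrightarrow> t < 1 \<Longrightarrow> 0 \<le> rearr \<mu> f t \<and> rearr \<mu> f t \<le> K * t powr (- \<alpha>)"
  shows "f \<in> grand_lorentz \<mu> p q"
proof -
  define \<delta> where "\<delta> = q / p - \<alpha> * q"
  define Q where "Q = q / p * (q - 1) * (K powr q / \<delta>)"
  have \<delta>: "0 < \<delta>" unfolding \<delta>_def using assms by (simp add: field_simps)
  have "glz_integral \<mu> p q \<epsilon> f < \<infinity> \<and>
        (q / p * \<epsilon> * enn2real (glz_integral \<mu> p q \<epsilon> f)) powr (1 / (q - \<epsilon>)) \<le> max 1 Q"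
    if \<epsilon>: "0 < \<epsilon> \<and> \<epsilon> < q - 1" for \<epsilon>
  proof
    have c: "\<delta> \<le> q / p - \<alpha> * (q - \<epsilon>)"
      unfolding \<delta>_def using \<epsilon> assms by (simp add: algebra_simps)
    have glz: "glz_integral \<mu> p q \<epsilon> f \<le> ennreal (K powr (q - \<epsilon>) / (q / p - \<alpha> * (q - \<epsilon>)))"
      using \<epsilon> c \<delta> assms by (intro glz_integral_le_powr bound) auto
    thus "glz_integral \<mu> p q \<epsilon> f < \<infinity>"
      using le_less_trans by fastforce
    have "enn2real (glz_integral \<mu> p q \<epsilon> f) \<le> K powr (q - \<epsilon>) / (q / p - \<alpha> * (q - \<epsilon>))"
      using glz c \<delta> by (simp add: enn2real_leI)
    also have "\<dots> \<le> K powr q / \<delta>"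
      using assms \<epsilon> c \<delta> by (intro frac_le powr_mono) auto
    finally have "q / p * \<epsilon> * enn2real (glz_integral \<mu> p q \<epsilon> f) \<le> Q"
      unfolding Q_def using \<epsilon> assms by (intro mult_mono) auto
    thus "(q / p * \<epsilon> * enn2real (glz_integral \<mu> p q \<epsilon> f)) powr (1 / (q - \<epsilon>)) \<le> max 1 Q"
      using \<epsilon> assms by (intro powr_le_max_one) auto
  qed
  thus ?thesis unfolding grand_lorentz_def using f by blast
qed

lemma not_grand_lorentz_if_rearr_ge_powr:
  fixes a :: "nat \<Rightarrow> real"
  assumes "0 < r" "1 < s" "1 / r < \<alpha>"
    and a_pos: "\<And>k. 0 < a k" and a_lim: "a \<longlonglongrightarrow> 0"
    and bound: "\<And>k t. 0 < t \<Longrightarrow> t < a k \<Longrightarrow> a k powr (- \<alpha>) \<le> rearr \<mu> f t"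
  shows "f \<notin> grand_lorentz \<mu> r s"
proof
  assume f: "f \<in> grand_lorentz \<mu> r s"
  have r\<alpha>: "1 < r * \<alpha>" using assms by (simp add: field_simps)
  define d where "d = s - s / (r * \<alpha>)"
  define \<epsilon> where "\<epsilon> = min (s - 1) d / 2"
  define e where "e = s / r - \<alpha> * (s - \<epsilon>)"
  have "0 < d" unfolding d_def using r\<alpha> assms by (simp add: field_simps)
  moreover have "min (s - 1) d \<le> s - 1" "min (s - 1) d \<le> d" by simp_all
  ultimately have \<epsilon>: "0 < \<epsilon>" "\<epsilon> < s - 1" "\<epsilon> < d"
    unfolding \<epsilon>_def using assms by auto
  \<comment> \<open>This choice of \<epsilon> makes the exponent e negative, so the lower bounds below blow up.\<close>
  have e: "e < 0"
  proof -
    have "0 < \<alpha>" using assms(1,3) by (smt (verit) divide_pos_pos)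
    have "s / r = \<alpha> * (s / (r * \<alpha>))" using \<open>0 < \<alpha>\<close> by simp
    also have "\<dots> < \<alpha> * (s - \<epsilon>)"
      using \<epsilon> \<open>0 < \<alpha>\<close> unfolding d_def by (intro mult_strict_left_mono) auto
    finally show ?thesis unfolding e_def by simp
  qed
  have "glz_integral \<mu> r s \<epsilon> f < \<infinity>"
    using f \<epsilon> unfolding grand_lorentz_def by blast
  then obtain G where G: "glz_integral \<mu> r s \<epsilon> f = ennreal G" and "0 \<le> G"
    by (cases "glz_integral \<mu> r s \<epsilon> f" rule: ennreal_cases) auto
  have lower: "r / s * a k powr e \<le> G" if "a k \<le> 1" for k
  proof -
    have "ennreal (r / s * (a k powr (- \<alpha>)) powr (s - \<epsilon>) * a k powr (s / r)) \<le> ennreal G"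
      unfolding G[symmetric] using assms that \<epsilon>
      by (intro glz_integral_ge_powr[OF _ _ _ a_pos _ _ bound]) auto
    moreover have "(a k powr (- \<alpha>)) powr (s - \<epsilon>) * a k powr (s / r) = a k powr e"
      unfolding e_def using a_pos[of k] by (simp add: powr_powr powr_add[symmetric] algebra_simps)
    ultimately show ?thesis
      using \<open>0 \<le> G\<close> by (simp add: mult.assoc)
  qed
  have "filterlim a (at_right 0) sequentially"
    using a_lim a_pos by (intro tendsto_imp_filterlim_at_right) auto
  moreover have "filterlim (\<lambda>x::real. r / s * x powr e) at_top (at_right 0)"
    using e assms by real_asymp
  ultimately have "filterlim (\<lambda>k. r / s * a k powr e) at_top sequentially"
    by (rule filterlim_compose[rotated])
  hence "\<forall>\<^sub>F k in sequentially. G < r / s * a k powr e"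
    unfolding filterlim_at_top_dense by blast
  moreover have "\<forall>\<^sub>F k in sequentially. a k < 1"
    using order_tendstoD(2)[OF a_lim, of 1] by simp
  ultimately obtain k where "G < r / s * a k powr e" "a k < 1"
    using eventually_happens'[OF sequentially_bot eventually_conj] by blast
  thus False using lower[of k] by simp
qed

theorem theorem3p5:
  fixes \<mu> :: "real measure" and p q r s :: real
  assumes "space \<mu> = {0<..<1}"
    and "finite_measure \<mu>"
    and "1 < q" "q \<le> p" "p < r" "r \<le> s"
    and "grand_lorentz \<mu> p q \<subseteq> grand_lorentz \<mu> r s"
  shows "\<exists>M>0. \<forall>A \<in> sets \<mu>. measure \<mu> A > 0 \<longrightarrow> measure \<mu> A \<ge> M"
proof (rule ccontr)
  assume "\<not> ?thesis"
  hence small: "\<exists>A\<in>sets \<mu>. 0 < measure \<mu> A \<and> measure \<mu> A < \<epsilon>" if "0 < \<epsilon>" for \<epsilon>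
    using that by (meson not_le)
  interpret finite_measure \<mu> by fact
  obtain E where E: "disjoint_family E" "\<And>k. E k \<in> sets \<mu>" "\<And>k. 0 < measure \<mu> (E k)"
    "\<And>k. measure \<mu> (E (Suc k)) \<le> measure \<mu> (E k) / 2"
    using halving_disjoint_family_if_small_sets[OF small] by blast
  define \<alpha> where "\<alpha> = (1 / r + 1 / p) / 2"
  have "1 / r < 1 / p" using assms by (simp add: frac_less2)
  hence \<alpha>: "1 / r < \<alpha>" "\<alpha> < 1 / p" "0 < \<alpha>"
    unfolding \<alpha>_def using assms by (auto intro: add_pos_pos)
  interpret halving_layers \<mu> E \<alpha>
    using E \<alpha> by unfold_locales auto
  obtain K where "1 \<le> K" and upper:
    "\<And>t. 0 < t \<Longrightarrow> t < 1 \<Longrightarrow> 0 \<le> rearr \<mu> layer_fun t \<and> rearr \<mu> layer_fun t \<le> K * t powr (- \<alpha>)"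
    using rearr_le_powr by blast
  have "layer_fun \<in> grand_lorentz \<mu> p q"
    using assms \<alpha> \<open>1 \<le> K\<close>
    by (intro grand_lorentz_if_rearr_le_powr[OF layer_fun_measurable _ _ _ _ _ upper]) auto
  moreover have "layer_fun \<notin> grand_lorentz \<mu> r s"
    using assms \<alpha> measure_pos measure_tendsto_0 rearr_ge_height
    by (intro not_grand_lorentz_if_rearr_ge_powr[where a = "\<lambda>k. measure \<mu> (E k)"])
      (auto simp: height_def)
  ultimately show False using assms(7) by blast
qed

end
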